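(* Let $K$ be a field, $N\ge 2$, $N_1,\dots,N_N\ge 1$, and for $1\le i\le N$, $1\le j\le N_i$ let $L_{i,j}=a_ix+b_iy+c_{i,j}\in K[x,y]$ be non-constant polynomials such that the lines $L_{i,j}=0$ in the affine plane are pairwise distinct, and lines with different first index are not parallel. Then for every $\lambda\in K^*$ the polynomial $$f(x,y)=\lambda\prod_{i=1}^N\prod_{j=1}^{N_i}L_{i,j}-1$$ is irreducible in $K[x,y]$; in particular the affine curve $f(x,y)=0$ is irreducible.
   Context: Note that all lines with the same first index $i$ are parallel (they share the coefficients $a_i,b_i$); "not parallel for distinct $i$" means $a_ib_k-a_kb_i\neq 0$ for $i\neq k$. *)

theory Defs
  imports "HOL-Computational_Algebra.Polynomial"
begin

text \<open>Bivariate polynomials K[x,y] are represented as K[y][x], i.e. the type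
  ('a poly) poly: the outer variable is x, the inner (coefficient) variable is y.
  This ring is isomorphic to K[x,y], so irreducibility is the same notion.\<close>

definition bivar_const :: "'a::zero \<Rightarrow> 'a poly poly" where
  "bivar_const c = [:[:c:]:]"

definition line_poly :: "'a::comm_ring_1 \<Rightarrow> 'a \<Rightarrow> 'a \<Rightarrow> 'a poly poly" where
  "line_poly a b c = [:[:c, b:], [:a:]:]"

end

theory Submission imports Defs begin

(* Suppose f = g * h.  Modulo a line L dividing P we have g * h = -1, so restricting to the
   line (parametrized by one coordinate, a ring map K[x,y] -> K[t] with kernel (L)) turns g
   into a unit of K[t], i.e. a constant:  L | g - al_L.  Two non-parallel lines meet in a
   point, where g takes both values, so al_L is the same constant al for lines of different
   directions, hence (as there are two directions) for all lines.  Distinct lines are pairwise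
   coprime, so P | g - al, and likewise P | h - be.  Comparing
   lam * P - 1 = (al + P u) (be + P v)  modulo P and then by degree in x gives u = 0 or v = 0,
   so g or h is a nonzero constant. *)

definition eval_at :: "'a::comm_ring_1 \<Rightarrow> 'a \<Rightarrow> 'a poly poly \<Rightarrow> 'a" where
  "eval_at x y p = poly (poly p [:x:]) y"

lemma eval_at_mult: "eval_at x y (p * q) = eval_at x y p * eval_at x y q"
  by (simp add: eval_at_def)

lemma eval_at_diff: "eval_at x y (p - q) = eval_at x y p - eval_at x y q"
  by (simp add: eval_at_def)

lemma eval_at_const: "eval_at x y (bivar_const t) = t"
  by (simp add: eval_at_def bivar_const_def)

lemma eval_at_line: "eval_at x y (line_poly a b c) = a * x + b * y + c"
  by (simp add: eval_at_def line_poly_def algebra_simps)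

lemma nonparallel_lines_meet:
  fixes a b c a' b' c' :: "'a::field"
  assumes nonpar: "a * b' - a' * b \<noteq> 0"
  shows "\<exists>x y. a * x + b * y + c = 0 \<and> a' * x + b' * y + c' = 0"
proof -
  define D where "D = a * b' - a' * b"
  have combine: "u * ((b * c' - b' * c) / D) + v * ((a' * c - a * c') / D) + w
      = (u * (b * c' - b' * c) + v * (a' * c - a * c') + w * D) / D" for u v w
    using nonpar by (simp add: D_def[symmetric] field_simps)
  have "a * (b * c' - b' * c) + b * (a' * c - a * c') + c * D = 0"
    and "a' * (b * c' - b' * c) + b' * (a' * c - a * c') + c' * D = 0"
    by (simp_all add: D_def algebra_simps)
  thus ?thesis by (metis combine div_0)
qed

text \<open>A polynomial congruent to a constant modulo each of two non-parallel lines is congruent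
  to the same constant modulo both: evaluate at their common point.\<close>

lemma constant_mod_nonparallel_lines:
  fixes g :: "'a::field poly poly"
  assumes "a * b' - a' * b \<noteq> 0"
    and "line_poly a b c dvd g - bivar_const t" and "line_poly a' b' c' dvd g - bivar_const t'"
  shows "t = t'"
proof -
  obtain x y where "eval_at x y (line_poly a b c) = 0" "eval_at x y (line_poly a' b' c') = 0"
    using nonparallel_lines_meet[OF assms(1), of c c'] by (auto simp: eval_at_line)
  with assms(2,3) have "eval_at x y (g - bivar_const t) = 0" "eval_at x y (g - bivar_const t') = 0"
    by (auto elim!: dvdE simp: eval_at_mult)
  thus ?thesis by (simp add: eval_at_diff eval_at_const)
qed

lemma map_poly_eval_mult:
  "map_poly (\<lambda>q. poly q y) (p * r) = map_poly (\<lambda>q. poly q y) p * map_poly (\<lambda>q. poly q y) r"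
  by (rule poly_eqI) (simp add: coeff_map_poly coeff_mult poly_sum)

lemma map_poly_eval_diff:
  fixes y :: "'a::comm_ring"
  shows "map_poly (\<lambda>q. poly q y) (p - r) = map_poly (\<lambda>q. poly q y) p - map_poly (\<lambda>q. poly q y) r"
  by (rule poly_eqI) (simp add: coeff_map_poly poly_diff)

definition line_restrict :: "'a::field \<Rightarrow> 'a \<Rightarrow> 'a \<Rightarrow> 'a poly poly \<Rightarrow> 'a poly" where
  "line_restrict a b c p =
     (if a \<noteq> 0 then poly p [:-c/a, -b/a:] else map_poly (\<lambda>q. poly q (-c/b)) p)"

lemma line_restrict_mult:
  "line_restrict a b c (p * q) = line_restrict a b c p * line_restrict a b c q"
  by (simp add: line_restrict_def map_poly_eval_mult)

lemma line_restrict_diff: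
  "line_restrict a b c (p - q) = line_restrict a b c p - line_restrict a b c q"
  by (simp add: line_restrict_def map_poly_eval_diff)

lemma line_restrict_const: "line_restrict a b c (bivar_const t) = [:t:]"
  by (simp add: line_restrict_def bivar_const_def map_poly_pCons)

lemma line_restrict_1: "line_restrict a b c 1 = 1"
  by (simp add: line_restrict_def)

lemma line_restrict_prod:
  "line_restrict a b c (prod f A) = (\<Prod>x\<in>A. line_restrict a b c (f x))"
  by (induction A rule: infinite_finite_induct)
    (simp_all add: line_restrict_mult line_restrict_1)

lemma line_restrict_other_line:
  assumes "a \<noteq> 0 \<or> b \<noteq> 0"
    and "(a' = a \<and> b' = b \<and> c' \<noteq> c) \<or> a * b' - a' * b \<noteq> 0"
  shows "line_restrict a b c (line_poly a' b' c') \<noteq> 0"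
  using assms by (auto simp: line_restrict_def line_poly_def field_simps map_poly_pCons)

lemma line_restrict_eq_0_iff:
  fixes a b c :: "'a::field"
  assumes ab: "a \<noteq> 0 \<or> b \<noteq> 0"
  shows "line_restrict a b c p = 0 \<longleftrightarrow> line_poly a b c dvd p"
proof (cases "a = 0")
  case False
  have "line_poly a b c = [:[:a:]:] * [:-[:-c/a, -b/a:], 1:]"
    using False by (simp add: line_poly_def)
  moreover have "is_unit [:[:a:]:]" using False by (simp add: is_unit_const_poly_iff dvd_field_iff)
  ultimately have "line_poly a b c dvd p \<longleftrightarrow> [:-[:-c/a, -b/a:], 1:] dvd p"
    by (metis mult_unit_dvd_iff')
  thus ?thesis using False by (simp add: line_restrict_def poly_eq_0_iff_dvd)
next
  case True
  hence b: "b \<noteq> 0" using ab by simp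
  have L: "line_poly a b c = [:[:b:] * [:-(-c/b), 1:]:]"
    using True b by (simp add: line_poly_def)
  have unit: "is_unit [:b:]" using b by (simp add: is_unit_const_poly_iff dvd_field_iff)
  have "line_poly a b c dvd p \<longleftrightarrow> (\<forall>n. [:-(-c/b), 1:] dvd coeff p n)"
    unfolding L const_poly_dvd_iff mult_unit_dvd_iff'[OF unit] ..
  also have "\<dots> \<longleftrightarrow> (\<forall>n. poly (coeff p n) (-c/b) = 0)"
    by (simp only: poly_eq_0_iff_dvd)
  also have "\<dots> \<longleftrightarrow> map_poly (\<lambda>q. poly q (-c/b)) p = 0"
    by (simp add: poly_eq_iff coeff_map_poly)
  finally show ?thesis using True by (simp add: line_restrict_def)
qed

text \<open>If g * h is a nonzero constant modulo L, then g is a constant modulo L: its restriction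
  to L is a unit of K[t].\<close>

lemma factor_constant_mod_line:
  fixes g h :: "'a::field poly poly"
  assumes ab: "a \<noteq> 0 \<or> b \<noteq> 0" and mu: "mu \<noteq> 0"
    and dvd: "line_poly a b c dvd g * h - bivar_const mu"
  shows "\<exists>t. line_poly a b c dvd g - bivar_const t"
proof -
  have "line_restrict a b c g * line_restrict a b c h = [:mu:]"
    using dvd by (simp add: line_restrict_eq_0_iff[OF ab, symmetric]
        line_restrict_diff line_restrict_mult line_restrict_const)
  hence "line_restrict a b c g dvd 1"
    using mu by (metis dvdI dvd_trans is_unit_const_poly_iff dvd_field_iff)
  then obtain t where "line_restrict a b c g = [:t:]"
    by (auto simp: is_unit_poly_iff)
  hence "line_restrict a b c (g - bivar_const t) = 0"
    by (simp add: line_restrict_diff line_restrict_const)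
  thus ?thesis by (auto simp: line_restrict_eq_0_iff[OF ab])
qed

lemma line_mult_dvd:
  fixes Q p :: "'a::field poly poly"
  assumes ab: "a \<noteq> 0 \<or> b \<noteq> 0"
    and "line_poly a b c dvd p" and "Q dvd p" and "line_restrict a b c Q \<noteq> 0"
  shows "line_poly a b c * Q dvd p"
proof -
  obtain q where p: "p = Q * q" using \<open>Q dvd p\<close> ..
  have "line_restrict a b c Q * line_restrict a b c q = 0"
    using assms(2) p by (simp add: line_restrict_eq_0_iff[OF ab, symmetric] line_restrict_mult)
  hence "line_poly a b c dvd q"
    using assms(4) by (simp add: line_restrict_eq_0_iff[OF ab, symmetric])
  thus ?thesis using p by (simp add: mult_dvd_mono mult.commute)
qed

text \<open>A product of pairwise distinct lines divides every polynomial that each line divides.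
  Parallel lines are assumed to be written with the same coefficients a, b.\<close>

lemma prod_lines_dvd:
  fixes A B C :: "'s \<Rightarrow> 'a::field" and p :: "'a poly poly"
  assumes "finite S"
    and "\<And>s. s \<in> S \<Longrightarrow> A s \<noteq> 0 \<or> B s \<noteq> 0"
    and "\<And>s t. s \<in> S \<Longrightarrow> t \<in> S \<Longrightarrow> s \<noteq> t \<Longrightarrow>
           (A t = A s \<and> B t = B s \<and> C t \<noteq> C s) \<or> A s * B t - A t * B s \<noteq> 0"
    and "\<And>s. s \<in> S \<Longrightarrow> line_poly (A s) (B s) (C s) dvd p"
  shows "(\<Prod>s\<in>S. line_poly (A s) (B s) (C s)) dvd p"
  using assms
proof (induction S rule: finite_induct)
  case empty
  then show ?case by simp
next
  case (insert s F)
  have "line_restrict (A s) (B s) (C s) (line_poly (A t) (B t) (C t)) \<noteq> 0" if "t \<in> F" for t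
    using insert that by (intro line_restrict_other_line) auto
  hence "line_restrict (A s) (B s) (C s) (\<Prod>t\<in>F. line_poly (A t) (B t) (C t)) \<noteq> 0"
    using insert.hyps by (simp add: line_restrict_prod prod_zero_iff)
  hence "line_poly (A s) (B s) (C s) * (\<Prod>t\<in>F. line_poly (A t) (B t) (C t)) dvd p"
    using insert by (intro line_mult_dvd) auto
  thus ?case using insert.hyps by simp
qed

text \<open>The final degree argument, over any coefficient ring R: if P has positive degree and
  lam * P - 1 factors as (al + P u) (be + P v), then P * (lam - w) = al * be + 1 for some w,
  so degree forces al * be = -1 and w = lam; comparing degrees in w = lam gives u = 0 or v = 0,
  so one factor is a unit constant.\<close>

lemma unit_factor_of_pencil:
  fixes P u v :: "'b::{idom_divide,algebraic_semidom} poly"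
  assumes degP: "degree P > 0"
    and eq: "[:lam:] * P - 1 = ([:al:] + P * u) * ([:be:] + P * v)"
  shows "is_unit ([:al:] + P * u) \<or> is_unit ([:be:] + P * v)"
proof -
  define w where "w = [:al:] * v + [:be:] * u + P * u * v"
  have split: "P * ([:lam:] - w) = [:al * be + 1:]"
    using eq by (simp add: w_def algebra_simps flip: pCons_one)
  have w: "w = [:lam:]" and albe: "al * be = -1"
  proof -
    have "[:lam:] - w = 0"
    proof (rule ccontr)
      assume "[:lam:] - w \<noteq> 0"
      hence "degree (P * ([:lam:] - w)) \<ge> degree P"
        using degP by (subst degree_mult_eq) auto
      thus False using split degP by simp
    qed
    thus "w = [:lam:]" by simp
    show "al * be = -1" using split \<open>[:lam:] - w = 0\<close> by (simp add: eq_neg_iff_add_eq_0)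
  qed
  have "u = 0 \<or> v = 0"
  proof (rule ccontr)
    assume "\<not> (u = 0 \<or> v = 0)"
    hence nz: "u \<noteq> 0" "v \<noteq> 0" "P \<noteq> 0" using degP by auto
    have "degree ([:al:] * v + [:be:] * u) \<le> max (degree v) (degree u)"
      using degree_add_le[of "smult al v" _ "smult be u"] degree_smult_le[of al v]
        degree_smult_le[of be u] by simp
    also have "\<dots> < degree (P * u * v)" using nz degP by (auto simp: degree_mult_eq)
    finally have "degree w = degree (P * u * v)"
      unfolding w_def by (rule degree_add_eq_right)
    thus False using w nz degP by (simp add: degree_mult_eq)
  qed
  moreover have "1 = al * - be" "1 = be * - al"
    using albe by (simp_all add: mult.commute)
  hence "is_unit al" "is_unit be" by (metis dvdI)+
  ultimately show ?thesis by (auto simp: is_unit_const_poly_iff)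
qed

text \<open>A finite arrangement of pairwise distinct lines (parallel ones sharing their coefficients
  a, b) in which any two lines are non-parallel or both cross a third line; this holds as soon
  as at least two directions occur.\<close>

locale line_arrangement =
  fixes S :: "'s set" and A B C :: "'s \<Rightarrow> 'a::field"
  assumes finite_lines: "finite S"
    and proper: "s \<in> S \<Longrightarrow> A s \<noteq> 0 \<or> B s \<noteq> 0"
    and distinct: "s \<in> S \<Longrightarrow> t \<in> S \<Longrightarrow> s \<noteq> t \<Longrightarrow>
           (A t = A s \<and> B t = B s \<and> C t \<noteq> C s) \<or> A s * B t - A t * B s \<noteq> 0"
    and linked: "s \<in> S \<Longrightarrow> t \<in> S \<Longrightarrow> A s * B t - A t * B s \<noteq> 0 \<or>
           (\<exists>u\<in>S. A s * B u - A u * B s \<noteq> 0 \<and> A t * B u - A u * B t \<noteq> 0)"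
    and nonempty: "S \<noteq> {}"
begin

abbreviation line :: "'s \<Rightarrow> 'a poly poly" where
  "line s \<equiv> line_poly (A s) (B s) (C s)"

definition product :: "'a poly poly" where
  "product = (\<Prod>s\<in>S. line s)"

lemma line_nonzero: "s \<in> S \<Longrightarrow> line s \<noteq> 0"
  using proper by (auto simp: line_poly_def)

text \<open>Some line involves x (a \<noteq> 0), so the product has positive degree in x.\<close>

lemma degree_product_pos: "degree product > 0"
proof -
  obtain s u where su: "s \<in> S" "u \<in> S" "A s * B u - A u * B s \<noteq> 0"
    using nonempty linked by fastforce
  then obtain s0 where s0: "s0 \<in> S" "A s0 \<noteq> 0" by (metis mult_zero_left diff_self)
  have "degree (line s0) \<le> (\<Sum>s\<in>S. degree (line s))"
    by (rule member_le_sum[OF s0(1) _ finite_lines]) simp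
  moreover have "degree (line s0) = 1" using s0(2) by (simp add: line_poly_def)
  ultimately show ?thesis
    by (simp add: product_def degree_prod_sum_eq line_nonzero)
qed

lemma factor_constant_mod_product:
  assumes fgh: "g * h = bivar_const lam * product - 1"
  shows "\<exists>al. product dvd g - bivar_const al"
proof -
  have "g * h - bivar_const (-1) = product * bivar_const lam"
    using fgh by (simp add: bivar_const_def mult.commute flip: pCons_one)
  hence line_dvd: "line s dvd g * h - bivar_const (-1)" if "s \<in> S" for s
    using that finite_lines by (auto simp: product_def intro: dvd_mult2 dvd_prodI)
  have "\<exists>t. line s dvd g - bivar_const t" if "s \<in> S" for s
    using factor_constant_mod_line[OF proper[OF that] _ line_dvd[OF that]] by simp
  then obtain al where al: "\<And>s. s \<in> S \<Longrightarrow> line s dvd g - bivar_const (al s)" by metis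
  have crossing: "al s = al t" if "s \<in> S" "t \<in> S" "A s * B t - A t * B s \<noteq> 0" for s t
    using constant_mod_nonparallel_lines[OF that(3) al[OF that(1)] al[OF that(2)]] .
  obtain s0 where s0: "s0 \<in> S" using nonempty by blast
  have "al s = al s0" if s: "s \<in> S" for s
    using linked[OF s s0]
  proof (elim disjE bexE conjE)
    show "A s * B s0 - A s0 * B s \<noteq> 0 \<Longrightarrow> al s = al s0" by (rule crossing[OF s s0])
    fix u assume "u \<in> S" "A s * B u - A u * B s \<noteq> 0" "A s0 * B u - A u * B s0 \<noteq> 0"
    thus "al s = al s0" using crossing s s0 by metis
  qed
  hence "product dvd g - bivar_const (al s0)"
    unfolding product_def using finite_lines proper distinct al
    by (intro prod_lines_dvd) auto
  thus ?thesis ..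
qed

lemma factor_constant_plus_multiple:
  assumes "g * h = bivar_const lam * product - 1"
  obtains al u where "g = bivar_const al + product * u"
proof -
  obtain al where "product dvd g - bivar_const al"
    using factor_constant_mod_product[OF assms] ..
  then obtain u where "g - bivar_const al = product * u" ..
  hence "g = bivar_const al + product * u" by (simp add: algebra_simps)
  thus thesis by (rule that)
qed

theorem irreducible_product_minus_one:
  assumes lam: "lam \<noteq> 0"
  shows "irreducible (bivar_const lam * product - 1)"
proof (rule irreducibleI)
  have "degree (bivar_const lam * product) = degree product"
    using lam by (simp add: bivar_const_def)
  hence "degree (bivar_const lam * product - 1) = degree product"
    using degree_add_eq_left[of "-1" "bivar_const lam * product"] degree_product_pos by simp
  thus "bivar_const lam * product - 1 \<noteq> 0" "\<not> is_unit (bivar_const lam * product - 1)"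
    using degree_product_pos by (auto simp: is_unit_poly_iff)
next
  fix g h assume fgh: "bivar_const lam * product - 1 = g * h"
  obtain al u where g: "g = bivar_const al + product * u"
    using fgh[symmetric] by (rule factor_constant_plus_multiple)
  obtain be v where h: "h = bivar_const be + product * v"
    using fgh[symmetric, unfolded mult.commute[of g]] by (rule factor_constant_plus_multiple)
  have "[:[:lam:]:] * product - 1 = ([:[:al:]:] + product * u) * ([:[:be:]:] + product * v)"
    using fgh unfolding g h bivar_const_def .
  from unit_factor_of_pencil[OF degree_product_pos this]
  show "is_unit g \<or> is_unit h" unfolding g h bivar_const_def .
qed

end

text \<open>The lines L_{i,j} with S = {(i,j). 1 \<le> i \<le> N, 1 \<le> j \<le> N_i} form an arrangement:
  lines of equal index i share direction and differ in c, and since N \<ge> 2 every direction i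
  is crossed by some other direction k.\<close>

theorem lemma2p1:
  fixes a b :: "nat \<Rightarrow> 'a::field" and c :: "nat \<Rightarrow> nat \<Rightarrow> 'a"
    and N :: nat and Ns :: "nat \<Rightarrow> nat" and lam :: 'a
  assumes "N \<ge> 2"
    and "\<forall>i\<in>{1..N}. Ns i \<ge> 1"
    and "\<forall>i\<in>{1..N}. a i \<noteq> 0 \<or> b i \<noteq> 0"
    and "\<forall>i\<in>{1..N}. \<forall>j\<in>{1..Ns i}. \<forall>j'\<in>{1..Ns i}. j \<noteq> j' \<longrightarrow> c i j \<noteq> c i j'"
    and "\<forall>i\<in>{1..N}. \<forall>k\<in>{1..N}. i \<noteq> k \<longrightarrow> a i * b k - a k * b i \<noteq> 0"
    and "lam \<noteq> 0"
  shows "irreducible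
           (bivar_const lam * (\<Prod>i\<in>{1..N}. \<Prod>j\<in>{1..Ns i}. line_poly (a i) (b i) (c i j)) - 1)"
proof -
  note N2 = assms(1) and det = assms(5)
  define S where "S = Sigma {1..N} (\<lambda>i. {1..Ns i})"
  interpret line_arrangement S "\<lambda>s. a (fst s)" "\<lambda>s. b (fst s)" "\<lambda>s. c (fst s) (snd s)"
  proof
    show "finite S" by (simp add: S_def)
    have "(1, 1) \<in> S" using N2 assms(2) by (auto simp: S_def)
    thus "S \<noteq> {}" by blast
    show "a (fst s) \<noteq> 0 \<or> b (fst s) \<noteq> 0" if "s \<in> S" for s
      using that assms(3) by (auto simp: S_def)
    show "(a (fst t) = a (fst s) \<and> b (fst t) = b (fst s) \<and> c (fst t) (snd t) \<noteq> c (fst s) (snd s))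
        \<or> a (fst s) * b (fst t) - a (fst t) * b (fst s) \<noteq> 0"
      if "s \<in> S" "t \<in> S" "s \<noteq> t" for s t
      using that assms(4) det by (cases "fst s = fst t") (auto simp: S_def prod_eq_iff)
  next
    fix s t assume s: "s \<in> S" and t: "t \<in> S"
    define k where "k = (if fst s = 1 then 2 else 1 :: nat)"
    have "(k, 1) \<in> S" "k \<noteq> fst s" using N2 assms(2) by (auto simp: S_def k_def)
    moreover have "fst t = fst s \<or> a (fst s) * b (fst t) - a (fst t) * b (fst s) \<noteq> 0"
      using s t det by (auto simp: S_def)
    ultimately show "a (fst s) * b (fst t) - a (fst t) * b (fst s) \<noteq> 0 \<or>
        (\<exists>u\<in>S. a (fst s) * b (fst u) - a (fst u) * b (fst s) \<noteq> 0 \<and>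
                a (fst t) * b (fst u) - a (fst u) * b (fst t) \<noteq> 0)"
      using s det by (auto simp: S_def)
  qed
  have "(\<Prod>i\<in>{1..N}. \<Prod>j\<in>{1..Ns i}. line_poly (a i) (b i) (c i j)) = product"
    unfolding product_def by (simp add: S_def prod.Sigma split_def)
  thus ?thesis using irreducible_product_minus_one[OF assms(6)] by simp
qed

end
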